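(* Let $\delta>0$ and let $A$ be a deterministic priority mechanism that processes bidders and is truthful without money and with verification for CAs with known $2$-minded bidders. Then the approximation ratio of $A$ on instances with $m$ goods is greater than $(1-\delta)m/2$.
   Context: Combinatorial auction with a set $\mathsf U$ of $m$ goods (single copy each) and bidders; bidder $i$ has a public collection $\mathcal S_i$ of $2$ nonempty subsets of $\mathsf U$ (known $2$-minded bidders) and a private valuation $v_i:\mathcal S_i\to\mathbb R_{\ge0}$, extended to all subsets $T$ by $v_i(T)=\max\{v_i(S'):S'\in\mathcal S_i,S'\subseteq T\}$ ($0$ if none). Truthfulness without money and with verification (known bidders) means: for all $i$, $\mathbf b_{-i}$, true $v_i$ and declarations $b_i$ with $b_i(A_i(b_i,\mathbf b_{-i}))\le v_i(A_i(b_i,\mathbf b_{-i}))$, $v_i(A_i(v_i,\mathbf b_{-i}))\ge v_i(A_i(b_i,\mathbf b_{-i}))$. Priority mechanism processing bidders: the input is a finite set $I$ of items $(i,v_i)$ (a bidder together with her declared valuation function), drawn from the class $\mathcal I$ of all such items. The mechanism proceeds in rounds; in each round, without looking at the unprocessed items, it chooses a total order on $\mathcal I$ (possibly depending on items processed and decisions made so far), receives the first unprocessed item $(i,v_i)$ of $I$ in this order, and irrevocably decides a (possibly empty) set $S$ allocated to $i$, collecting welfare $v_i(S)$. The output must be feasible (allocated sets pairwise disjoint). Approximation ratio $\alpha$: welfare $\ge\mathrm{OPT}/\alpha$ on every input, $\mathrm{OPT}$ being the maximum welfare of a feasible allocation. *)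

theory Defs
  imports Main "HOL-Library.Extended_Real"
begin

(* Goods have type 'g; the set of goods is U.
   A bidder is a pair (name, public collection S_i); the class of all bidders
   is thus as rich as possible (every collection, infinitely many copies). *)
type_synonym 'g bidder = "nat \<times> 'g set set"
type_synonym 'g valuation = "'g set \<Rightarrow> real"
type_synonym 'g item = "'g bidder \<times> 'g valuation"
type_synonym 'g history = "('g item \<times> 'g set) list"

definition coll :: "'g bidder \<Rightarrow> 'g set set" where
  "coll i = snd i"

definition valid_bidder :: "'g set \<Rightarrow> 'g bidder \<Rightarrow> bool" where
  "valid_bidder U i \<longleftrightarrow> coll i \<subseteq> Pow U \<and> {} \<notin> coll i \<and> card (coll i) = 2"

(* a valuation S_i -> R_{>=0}, represented as a function that is 0 outside S_i *)
definition valid_val :: "'g bidder \<Rightarrow> 'g valuation \<Rightarrow> bool" where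
  "valid_val i v \<longleftrightarrow> (\<forall>S\<in>coll i. 0 \<le> v S) \<and> (\<forall>S. S \<notin> coll i \<longrightarrow> v S = 0)"

definition ext_val :: "'g bidder \<Rightarrow> 'g valuation \<Rightarrow> 'g set \<Rightarrow> real" where
  "ext_val i v T = (if {S\<in>coll i. S \<subseteq> T} = {} then 0
                    else Max (v ` {S\<in>coll i. S \<subseteq> T}))"

definition Items :: "'g set \<Rightarrow> 'g item set" where
  "Items U = {(i, v). valid_bidder U i \<and> valid_val i v}"

definition valid_input :: "'g set \<Rightarrow> 'g item set \<Rightarrow> bool" where
  "valid_input U I \<longleftrightarrow> finite I \<and> I \<subseteq> Items U \<and>
     (\<forall>x\<in>I. \<forall>y\<in>I. fst x = fst y \<longrightarrow> x = y)"

(* Priority mechanism: ord h is the total order on \<I> chosen after history h,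
   dec h x is the set irrevocably allocated to the received item x. *)
definition priority_orders :: "'g set \<Rightarrow> ('g history \<Rightarrow> ('g item \<times> 'g item) set) \<Rightarrow> bool" where
  "priority_orders U ord \<longleftrightarrow> (\<forall>h. linear_order_on (Items U) (ord h))"

definition first_in :: "('a \<times> 'a) set \<Rightarrow> 'a set \<Rightarrow> 'a" where
  "first_in r R = (THE x. x \<in> R \<and> (\<forall>y\<in>R. (x, y) \<in> r))"

fun hist :: "('g history \<Rightarrow> ('g item \<times> 'g item) set) \<Rightarrow> ('g history \<Rightarrow> 'g item \<Rightarrow> 'g set)
             \<Rightarrow> 'g item set \<Rightarrow> nat \<Rightarrow> 'g history" where
  "hist ord dec I 0 = []"
| "hist ord dec I (Suc k) =
     (let h = hist ord dec I k; R = I - fst ` set h in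
      if R = {} then h else (let x = first_in (ord h) R in h @ [(x, dec h x)]))"

definition run :: "('g history \<Rightarrow> ('g item \<times> 'g item) set) \<Rightarrow> ('g history \<Rightarrow> 'g item \<Rightarrow> 'g set)
             \<Rightarrow> 'g item set \<Rightarrow> 'g history" where
  "run ord dec I = hist ord dec I (card I)"

definition alloc :: "('g history \<Rightarrow> ('g item \<times> 'g item) set) \<Rightarrow> ('g history \<Rightarrow> 'g item \<Rightarrow> 'g set)
             \<Rightarrow> 'g item set \<Rightarrow> 'g bidder \<Rightarrow> 'g set" where
  "alloc ord dec I i = \<Union>{S. \<exists>v. ((i, v), S) \<in> set (run ord dec I)}"

definition feasible_alloc :: "'g set \<Rightarrow> 'g item set \<Rightarrow> ('g bidder \<Rightarrow> 'g set) \<Rightarrow> bool" where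
  "feasible_alloc U I f \<longleftrightarrow> (\<forall>x\<in>I. f (fst x) \<subseteq> U) \<and>
     (\<forall>x\<in>I. \<forall>y\<in>I. fst x \<noteq> fst y \<longrightarrow> f (fst x) \<inter> f (fst y) = {})"

definition welfare_of :: "'g item set \<Rightarrow> ('g bidder \<Rightarrow> 'g set) \<Rightarrow> real" where
  "welfare_of I f = (\<Sum>x\<in>I. ext_val (fst x) (snd x) (f (fst x)))"

definition OPT :: "'g set \<Rightarrow> 'g item set \<Rightarrow> real" where
  "OPT U I = Max {welfare_of I f | f. feasible_alloc U I f}"

definition mech_feasible :: "'g set \<Rightarrow> ('g history \<Rightarrow> ('g item \<times> 'g item) set)
     \<Rightarrow> ('g history \<Rightarrow> 'g item \<Rightarrow> 'g set) \<Rightarrow> bool" where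
  "mech_feasible U ord dec \<longleftrightarrow>
     (\<forall>I. valid_input U I \<longrightarrow> feasible_alloc U I (alloc ord dec I))"

definition truthful_verif :: "'g set \<Rightarrow> ('g history \<Rightarrow> ('g item \<times> 'g item) set)
     \<Rightarrow> ('g history \<Rightarrow> 'g item \<Rightarrow> 'g set) \<Rightarrow> bool" where
  "truthful_verif U ord dec \<longleftrightarrow>
     (\<forall>I i v b. valid_input U I \<longrightarrow> valid_bidder U i \<longrightarrow> i \<notin> fst ` I \<longrightarrow>
        valid_val i v \<longrightarrow> valid_val i b \<longrightarrow>
        (let Ab = alloc ord dec (insert (i, b) I) i;
             Av = alloc ord dec (insert (i, v) I) i in
         ext_val i b Ab \<le> ext_val i v Ab \<longrightarrow> ext_val i v Ab \<le> ext_val i v Av))"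

definition is_approx :: "'g set \<Rightarrow> ('g history \<Rightarrow> ('g item \<times> 'g item) set)
     \<Rightarrow> ('g history \<Rightarrow> 'g item \<Rightarrow> 'g set) \<Rightarrow> real \<Rightarrow> bool" where
  "is_approx U ord dec \<alpha> \<longleftrightarrow>
     (\<forall>I. valid_input U I \<longrightarrow> OPT U I / \<alpha> \<le> welfare_of I (alloc ord dec I))"

(* the approximation ratio: infimum of all (positive) alpha for which A is an
   alpha-approximation; infinity if there is none *)
definition approx_ratio :: "'g set \<Rightarrow> ('g history \<Rightarrow> ('g item \<times> 'g item) set)
     \<Rightarrow> ('g history \<Rightarrow> 'g item \<Rightarrow> 'g set) \<Rightarrow> ereal" where
  "approx_ratio U ord dec = Inf {ereal \<alpha> | \<alpha>. \<alpha> > 0 \<and> is_approx U ord dec \<alpha>}"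

end

theory Submission
  imports Defs "HOL-Library.FuncSet"
begin

text \<open>
  Give every good g a bidder interested in {g} (worth 1) or in all of U (worth 2).
  Run alone with a declaration valuing only U, such a bidder must receive U, since any
  finite approximation ratio forbids welfare 0; truthfulness with verification then forces
  the mechanism to give U to the bidder alone also under her true valuation, where the
  lie only understates {g}. With all m bidders present, the first one processed is in
  exactly this situation and takes U, so the mechanism collects welfare at most 2 while
  handing every bidder her own good yields m.
\<close>

lemma linear_order_on_has_least:
  assumes lin: "linear_order_on A r" and "finite R" "R \<noteq> {}" "R \<subseteq> A"
  shows "\<exists>x\<in>R. \<forall>y\<in>R. (x, y) \<in> r"
  using \<open>finite R\<close> \<open>R \<noteq> {}\<close> \<open>R \<subseteq> A\<close>
proof (induction R rule: finite_ne_induct)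
  case (singleton x)
  then show ?case
    using lin by (auto simp: order_on_defs refl_on_def)
next
  case (insert a R)
  then obtain x where x: "x \<in> R" "\<forall>y\<in>R. (x, y) \<in> r" and "a \<in> A" "x \<in> A"
    by auto
  show ?case
  proof (cases "(a, x) \<in> r")
    case True
    with x lin \<open>a \<in> A\<close> have "\<forall>y\<in>insert a R. (a, y) \<in> r"
      by (auto simp: order_on_defs refl_on_def dest: transD)
    then show ?thesis by blast
  next
    case False
    with lin \<open>a \<in> A\<close> \<open>x \<in> A\<close> have "(x, a) \<in> r"
      by (cases "a = x") (auto simp: order_on_defs refl_on_def total_on_def)
    with x show ?thesis by blast
  qed
qed

lemma first_in_mem:
  assumes lin: "linear_order_on A r" and "finite R" "R \<noteq> {}" "R \<subseteq> A"
  shows "first_in r R \<in> R"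
proof -
  obtain x where x: "x \<in> R" "\<forall>y\<in>R. (x, y) \<in> r"
    using linear_order_on_has_least[OF assms] by blast
  moreover have "antisym r"
    using lin by (simp add: order_on_defs)
  ultimately have "first_in r R = x"
    unfolding first_in_def by (blast intro: the_equality dest: antisymD)
  with x show ?thesis by simp
qed

lemma set_hist_mono: "k \<le> n \<Longrightarrow> set (hist ord dec I k) \<subseteq> set (hist ord dec I n)"
proof (induction n rule: dec_induct)
  case (step n)
  then show ?case by (auto simp: Let_def)
qed simp

lemma first_step_in_run:
  fixes ord :: "'g history \<Rightarrow> ('g item \<times> 'g item) set"
  assumes "finite I" "I \<noteq> {}"
  defines "x \<equiv> first_in (ord []) I"
  shows "(x, dec [] x) \<in> set (run ord dec I)"
proof -
  have "hist ord dec I 1 = [(x, dec [] x)]"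
    using assms by (simp add: Let_def)
  moreover have "1 \<le> card I"
    using assms by (simp add: Suc_le_eq card_gt_0_iff)
  ultimately show ?thesis
    unfolding run_def using set_hist_mono[of 1 "card I" ord dec I] by auto
qed

lemma alloc_singleton:
  assumes "linear_order_on A (ord [])" "x \<in> A"
  shows "alloc ord dec {x} (fst x) = dec [] x"
proof -
  have "first_in (ord []) {x} = x"
    using first_in_mem[OF assms(1), of "{x}"] assms(2) by simp
  then have "run ord dec {x} = [(x, dec [] x)]"
    by (simp add: run_def Let_def)
  then show ?thesis
    unfolding alloc_def by (cases x) auto
qed

lemma subset_alloc: "(x, D) \<in> set (run ord dec I) \<Longrightarrow> D \<subseteq> alloc ord dec I (fst x)"
  unfolding alloc_def by (cases x) auto

lemma welfare_le_OPT:
  assumes "finite U" "finite I" "feasible_alloc U I f"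
  shows "welfare_of I f \<le> OPT U I"
proof -
  let ?g = "\<lambda>F. \<Sum>x\<in>I. ext_val (fst x) (snd x) (F x)"
  have "{welfare_of I f | f. feasible_alloc U I f} \<subseteq> ?g ` (I \<rightarrow>\<^sub>E Pow U)"
  proof clarify
    fix f assume "feasible_alloc U I f"
    then have "restrict (\<lambda>x. f (fst x)) I \<in> I \<rightarrow>\<^sub>E Pow U"
      by (auto simp: feasible_alloc_def)
    moreover have "welfare_of I f = ?g (restrict (\<lambda>x. f (fst x)) I)"
      unfolding welfare_of_def by (auto intro: sum.cong)
    ultimately show "welfare_of I f \<in> ?g ` (I \<rightarrow>\<^sub>E Pow U)" by blast
  qed
  moreover have "finite (?g ` (I \<rightarrow>\<^sub>E Pow U))"
    using assms by (intro finite_imageI finite_PiE) auto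
  ultimately show ?thesis
    unfolding OPT_def using assms(3) by (intro Max_ge) (auto dest: finite_subset)
qed

lemma ext_val_nested_pair:
  assumes "coll i = {S, T}" "S \<subseteq> T"
  shows "ext_val i v X = (if T \<subseteq> X then max (v S) (v T) else if S \<subseteq> X then v S else 0)"
proof -
  consider "T \<subseteq> X" | "\<not> T \<subseteq> X" "S \<subseteq> X" | "\<not> S \<subseteq> X"
    by blast
  then show ?thesis
  proof cases
    case 1
    with assms have "{S' \<in> coll i. S' \<subseteq> X} = {S, T}" by auto
    with 1 show ?thesis by (simp add: ext_val_def max_def)
  next
    case 2
    with assms have "{S' \<in> coll i. S' \<subseteq> X} = {S}" by auto
    with 2 show ?thesis by (simp add: ext_val_def)
  next
    case 3
    with assms have "{S' \<in> coll i. S' \<subseteq> X} = {}" by auto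
    with 3 assms(2) show ?thesis by (auto simp: ext_val_def)
  qed
qed

(* All these bidders share the name 0: they are told apart by their collections. *)
definition item_or_all_bidder :: "'g set \<Rightarrow> 'g \<Rightarrow> 'g bidder" where
  "item_or_all_bidder U g = (0, {{g}, U})"

definition item_or_all_val :: "'g set \<Rightarrow> 'g \<Rightarrow> 'g valuation" where
  "item_or_all_val U g S = (if S = {g} then 1 else if S = U then 2 else 0)"

definition all_only_val :: "'g set \<Rightarrow> 'g valuation" where
  "all_only_val U S = (if S = U then 2 else 0)"

definition item_or_all_instance :: "'g set \<Rightarrow> 'g item set" where
  "item_or_all_instance U = (\<lambda>g. (item_or_all_bidder U g, item_or_all_val U g)) ` U"

locale truthful_priority_mechanism =
  fixes U :: "'g set"
    and ord :: "'g history \<Rightarrow> ('g item \<times> 'g item) set"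
    and dec :: "'g history \<Rightarrow> 'g item \<Rightarrow> 'g set"
  assumes two_le_card: "2 \<le> card U"
    and priority: "priority_orders U ord"
    and feasible: "mech_feasible U ord dec"
    and truthful: "truthful_verif U ord dec"
begin

lemma finite_U: "finite U"
  using two_le_card card.infinite by fastforce

lemma linear_order_on_ord: "linear_order_on (Items U) (ord h)"
  using priority by (simp add: priority_orders_def)

lemma singleton_ne_U: "{g} \<noteq> U"
  using two_le_card by auto

lemma ext_val_item_or_all:
  assumes "g \<in> U"
  shows "ext_val (item_or_all_bidder U g) v X =
    (if U \<subseteq> X then max (v {g}) (v U) else if g \<in> X then v {g} else 0)"
  using ext_val_nested_pair[of "item_or_all_bidder U g" "{g}" U] assms
  by (simp add: item_or_all_bidder_def coll_def)

lemma item_or_all_items: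
  assumes "g \<in> U"
  shows "(item_or_all_bidder U g, item_or_all_val U g) \<in> Items U"
    and "(item_or_all_bidder U g, all_only_val U) \<in> Items U"
  using assms singleton_ne_U
  by (auto simp: Items_def valid_bidder_def valid_val_def item_or_all_bidder_def coll_def
      item_or_all_val_def all_only_val_def)

lemma inj_on_item_or_all_bidder: "inj_on (item_or_all_bidder U) U"
proof
  fix g g' assume "g \<in> U" "item_or_all_bidder U g = item_or_all_bidder U g'"
  then have "{g} = {g'} \<or> {g} = U"
    by (auto simp: item_or_all_bidder_def doubleton_eq_iff)
  then show "g = g'"
    using singleton_ne_U by simp
qed

lemma alloc_subset_U:
  assumes "valid_input U I" "x \<in> I"
  shows "alloc ord dec I (fst x) \<subseteq> U"
  using feasible assms by (auto simp: mech_feasible_def feasible_alloc_def)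

lemma truthful_alone:
  assumes "valid_bidder U i" "valid_val i v" "valid_val i b"
    and "ext_val i b (alloc ord dec {(i, b)} i) \<le> ext_val i v (alloc ord dec {(i, b)} i)"
  shows "ext_val i v (alloc ord dec {(i, b)} i) \<le> ext_val i v (alloc ord dec {(i, v)} i)"
proof -
  have "valid_input U {}"
    by (simp add: valid_input_def)
  with truthful assms show ?thesis
    unfolding truthful_verif_def Let_def by blast
qed

lemma lone_bidder_gets_all:
  assumes "\<alpha> > 0" "is_approx U ord dec \<alpha>" "g \<in> U"
  shows "U \<subseteq> dec [] (item_or_all_bidder U g, item_or_all_val U g)"
proof -
  let ?i = "item_or_all_bidder U g" and ?v = "item_or_all_val U g" and ?b = "all_only_val U"
  let ?Ab = "alloc ord dec {(?i, ?b)} ?i" and ?Av = "alloc ord dec {(?i, ?v)} ?i"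
  note ext = ext_val_item_or_all[OF \<open>g \<in> U\<close>]
  have valid: "valid_input U {(?i, ?b)}"
    using item_or_all_items[OF \<open>g \<in> U\<close>] by (simp add: valid_input_def)
  have "2 = welfare_of {(?i, ?b)} (\<lambda>_. U)"
    using \<open>g \<in> U\<close> singleton_ne_U by (simp add: welfare_of_def ext all_only_val_def)
  also have "\<dots> \<le> OPT U {(?i, ?b)}"
    by (rule welfare_le_OPT) (auto simp: finite_U feasible_alloc_def)
  finally have "0 < OPT U {(?i, ?b)} / \<alpha>"
    using \<open>\<alpha> > 0\<close> by simp
  also have "\<dots> \<le> welfare_of {(?i, ?b)} (alloc ord dec {(?i, ?b)})"
    using assms(2) valid by (simp add: is_approx_def)
  also have "\<dots> = ext_val ?i ?b ?Ab"
    by (simp add: welfare_of_def)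
  finally have "U \<subseteq> ?Ab"
    by (auto simp: ext all_only_val_def split: if_splits)
  moreover have "?Ab \<subseteq> U"
    using alloc_subset_U[OF valid] by simp
  ultimately have "ext_val ?i ?b ?Ab = 2" and "ext_val ?i ?v ?Ab = 2"
    using singleton_ne_U[of g] by (auto simp: ext all_only_val_def item_or_all_val_def)
  then have "2 \<le> ext_val ?i ?v ?Av"
    using truthful_alone item_or_all_items[OF \<open>g \<in> U\<close>]
    unfolding Items_def by fastforce
  then have "U \<subseteq> ?Av"
    using singleton_ne_U by (auto simp: ext item_or_all_val_def split: if_splits)
  then show ?thesis
    using alloc_singleton[where ord = ord, OF linear_order_on_ord item_or_all_items(1)[OF \<open>g \<in> U\<close>]] by simp
qed

lemma valid_input_item_or_all_instance: "valid_input U (item_or_all_instance U)"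
  using finite_U item_or_all_items(1) inj_on_item_or_all_bidder
  by (auto simp: valid_input_def item_or_all_instance_def inj_on_def)

lemma welfare_of_item_or_all_instance:
  "welfare_of (item_or_all_instance U) f =
     (\<Sum>g\<in>U. ext_val (item_or_all_bidder U g) (item_or_all_val U g) (f (item_or_all_bidder U g)))"
  unfolding welfare_of_def item_or_all_instance_def
  using inj_on_item_or_all_bidder by (subst sum.reindex) (auto simp: inj_on_def)

lemma card_le_OPT_item_or_all_instance: "real (card U) \<le> OPT U (item_or_all_instance U)"
proof -
  define f where "f i = {g \<in> U. i = item_or_all_bidder U g}" for i
  have f: "f (item_or_all_bidder U g) = {g}" if "g \<in> U" for g
    using that inj_on_item_or_all_bidder by (auto simp: f_def inj_on_def)
  have "ext_val (item_or_all_bidder U g) (item_or_all_val U g) (f (item_or_all_bidder U g)) = 1"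
    if "g \<in> U" for g
    using that singleton_ne_U[of g] by (auto simp: ext_val_item_or_all f item_or_all_val_def)
  then have "real (card U) = welfare_of (item_or_all_instance U) f"
    by (simp add: welfare_of_item_or_all_instance)
  also have "\<dots> \<le> OPT U (item_or_all_instance U)"
  proof (rule welfare_le_OPT)
    show "finite (item_or_all_instance U)"
      using valid_input_item_or_all_instance by (simp add: valid_input_def)
    have "f i \<subseteq> U" "i \<noteq> j \<Longrightarrow> f i \<inter> f j = {}" for i j
      by (auto simp: f_def)
    then show "feasible_alloc U (item_or_all_instance U) f"
      by (simp add: feasible_alloc_def)
  qed (rule finite_U)
  finally show ?thesis .
qed

lemma first_processed_gets_all:
  assumes "\<alpha> > 0" "is_approx U ord dec \<alpha>"
  obtains g0 where "g0 \<in> U"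
    and "U \<subseteq> alloc ord dec (item_or_all_instance U) (item_or_all_bidder U g0)"
proof -
  let ?I = "item_or_all_instance U" and ?i = "item_or_all_bidder U"
  have "finite ?I" "?I \<subseteq> Items U"
    using valid_input_item_or_all_instance by (simp_all add: valid_input_def)
  moreover have "?I \<noteq> {}"
    using two_le_card by (auto simp: item_or_all_instance_def)
  ultimately have "first_in (ord []) ?I \<in> ?I"
    using first_in_mem[OF linear_order_on_ord] by blast
  then obtain g0 where "g0 \<in> U" and first: "first_in (ord []) ?I = (?i g0, item_or_all_val U g0)"
    unfolding item_or_all_instance_def by blast
  have "(first_in (ord []) ?I, dec [] (first_in (ord []) ?I)) \<in> set (run ord dec ?I)"
    using \<open>finite ?I\<close> \<open>?I \<noteq> {}\<close> by (rule first_step_in_run)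
  then have "dec [] (?i g0, item_or_all_val U g0) \<subseteq> alloc ord dec ?I (?i g0)"
    using subset_alloc unfolding first by fastforce
  with \<open>g0 \<in> U\<close> lone_bidder_gets_all[OF assms \<open>g0 \<in> U\<close>] show ?thesis
    using that by blast
qed

lemma welfare_item_or_all_instance_le_2:
  assumes "\<alpha> > 0" "is_approx U ord dec \<alpha>"
  shows "welfare_of (item_or_all_instance U) (alloc ord dec (item_or_all_instance U)) \<le> 2"
proof -
  let ?I = "item_or_all_instance U" and ?i = "item_or_all_bidder U"
  have valid: "valid_input U ?I"
    by (rule valid_input_item_or_all_instance)
  obtain g0 where "g0 \<in> U" and first_gets_all: "U \<subseteq> alloc ord dec ?I (?i g0)"
    using first_processed_gets_all[OF assms] .
  have others: "alloc ord dec ?I (?i g) = {}" if "g \<in> U" "g \<noteq> g0" for g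
  proof -
    have items: "(?i g, item_or_all_val U g) \<in> ?I" "(?i g0, item_or_all_val U g0) \<in> ?I"
      using that \<open>g0 \<in> U\<close> by (auto simp: item_or_all_instance_def)
    moreover have "?i g \<noteq> ?i g0"
      using inj_on_item_or_all_bidder that \<open>g0 \<in> U\<close> by (auto simp: inj_on_def)
    ultimately have "alloc ord dec ?I (?i g) \<inter> alloc ord dec ?I (?i g0) = {}"
      using feasible valid unfolding mech_feasible_def feasible_alloc_def by fastforce
    moreover have "alloc ord dec ?I (?i g) \<subseteq> U"
      using alloc_subset_U[OF valid items(1)] by simp
    ultimately show ?thesis
      using first_gets_all by blast
  qed
  have "welfare_of ?I (alloc ord dec ?I) =
      ext_val (?i g0) (item_or_all_val U g0) (alloc ord dec ?I (?i g0))
      + (\<Sum>g\<in>U - {g0}. ext_val (?i g) (item_or_all_val U g) (alloc ord dec ?I (?i g)))"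
    unfolding welfare_of_item_or_all_instance using finite_U \<open>g0 \<in> U\<close> by (rule sum.remove)
  also have "(\<Sum>g\<in>U - {g0}. ext_val (?i g) (item_or_all_val U g) (alloc ord dec ?I (?i g))) = 0"
    using others by (intro sum.neutral) (auto simp: ext_val_item_or_all)
  also have "ext_val (?i g0) (item_or_all_val U g0) (alloc ord dec ?I (?i g0)) + 0 \<le> 2"
    using \<open>g0 \<in> U\<close> by (simp add: ext_val_item_or_all item_or_all_val_def)
  finally show ?thesis .
qed

lemma half_card_le_approx:
  assumes "\<alpha> > 0" "is_approx U ord dec \<alpha>"
  shows "real (card U) / 2 \<le> \<alpha>"
proof -
  let ?I = "item_or_all_instance U"
  have "real (card U) / \<alpha> \<le> OPT U ?I / \<alpha>"
    using card_le_OPT_item_or_all_instance assms(1) by (simp add: divide_right_mono)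
  also have "\<dots> \<le> welfare_of ?I (alloc ord dec ?I)"
    using assms(2) valid_input_item_or_all_instance by (simp add: is_approx_def)
  also have "\<dots> \<le> 2"
    by (rule welfare_item_or_all_instance_le_2[OF assms])
  finally show ?thesis
    using assms(1) by (simp add: field_simps)
qed

lemma half_card_le_approx_ratio: "ereal (real (card U) / 2) \<le> approx_ratio U ord dec"
  unfolding approx_ratio_def using half_card_le_approx by (auto intro: Inf_greatest)

end

theorem theorem15:
  fixes U :: "'g set" and m :: nat and \<delta> :: real
    and ord :: "'g history \<Rightarrow> ('g item \<times> 'g item) set"
    and dec :: "'g history \<Rightarrow> 'g item \<Rightarrow> 'g set"
  assumes "finite U" and "card U = m" and "m \<ge> 2"
    and "\<delta> > 0"
    and "priority_orders U ord"
    and "mech_feasible U ord dec"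
    and "truthful_verif U ord dec"
  shows "approx_ratio U ord dec > ereal ((1 - \<delta>) * real m / 2)"
proof -
  interpret truthful_priority_mechanism U ord dec
    using assms by unfold_locales auto
  have "ereal ((1 - \<delta>) * real m / 2) < ereal (real m / 2)"
    using \<open>\<delta> > 0\<close> \<open>m \<ge> 2\<close> by simp
  also have "\<dots> \<le> approx_ratio U ord dec"
    using half_card_le_approx_ratio \<open>card U = m\<close> by simp
  finally show ?thesis .
qed

end
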